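(* Let $N_t, N_m, N_e$ be positive integers with $N_e < N_t$, put $n = N_t - N_e$, $m = \min(n, N_m)$, $k = \max(n, N_m)$. Fix $g>0$, $r_s>0$ and positive coefficients $b_1,\dots,b_m$ with $b_m \le \dots \le b_1$ and $\sum_{l=1}^m b_l = r_s$. For $\eta>0$ define $\xi(x) = \frac{n}{\eta}\big((1+g\eta)^x-1\big)$, $\alpha_l = \Gamma_{inc}(\xi(r_s),k-l+1)$, $\beta_l = \Gamma_{inc}(\xi(b_l),k-l+1)$, and for $x>0$ $$f_l(x) = \Big((1+g\eta)^x - x g\eta(1+g\eta)^{x-1} - 1\Big)\frac{\xi(x)^{k-l}e^{-\xi(x)}/(k-l)!}{\Gamma_{inc}(\xi(x),k-l+1)}.$$ Let $U(\eta) = \prod_{l=1}^m \alpha_l\Big(1 - \prod_{l=1}^m\big[1 - \frac{\beta_l}{\alpha_l}\big]\Big)$ (the upper bound on the zero-forcing secrecy outage probability). Then $$-\eta\frac{d}{d\eta}\ln U(\eta) = \frac{n}{\eta}\sum_{l=1}^m\left[f_l(r_s) + \frac{\beta_l}{\alpha_l}\big(f_l(b_l)-f_l(r_s)\big)\frac{\prod_{j\ne l}\big(1-\frac{\beta_j}{\alpha_j}\big)}{1-\prod_{j=1}^m\big(1-\frac{\beta_j}{\alpha_j}\big)}\right],$$ and this quantity is the secrecy diversity gain estimate $\hat d_s^U(r_s,\eta)$ of the zero-forcing scheme.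
   Context: $\Gamma_{inc}(x,a) = \frac{1}{(a-1)!}\int_0^x t^{a-1}e^{-t}\,dt$ for $x\ge 0$ and positive integer $a$. The secrecy diversity gain associated with an error probability $P(\eta)$ at SNR $\eta$ is defined as $-\eta\,\partial \ln P/\partial\eta$, with the secrecy rate $R_s = r_s\ln(1+g\eta)$ (fixed $r_s$). Products $\prod_{j\neq l}$ range over $j\in\{1,\dots,m\}\setminus\{l\}$. *)

theory Defs
  imports "HOL-Analysis.Analysis"
begin

text \<open>Normalized lower incomplete Gamma function, for positive integer a.\<close>
definition Gamma_inc :: "real \<Rightarrow> nat \<Rightarrow> real" where
  "Gamma_inc x a = (1 / fact (a - 1)) * integral {0..x} (\<lambda>t. t ^ (a - 1) * exp (- t))"

definition xi :: "nat \<Rightarrow> real \<Rightarrow> real \<Rightarrow> real \<Rightarrow> real" where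
  "xi n g \<eta> x = real n / \<eta> * ((1 + g * \<eta>) powr x - 1)"

definition f_l :: "nat \<Rightarrow> nat \<Rightarrow> nat \<Rightarrow> real \<Rightarrow> real \<Rightarrow> real \<Rightarrow> real" where
  "f_l n k l g \<eta> x =
     ((1 + g * \<eta>) powr x - x * g * \<eta> * (1 + g * \<eta>) powr (x - 1) - 1) *
     ((xi n g \<eta> x) ^ (k - l) * exp (- xi n g \<eta> x) / fact (k - l))
     / Gamma_inc (xi n g \<eta> x) (k - l + 1)"

definition alpha_l :: "nat \<Rightarrow> nat \<Rightarrow> nat \<Rightarrow> real \<Rightarrow> real \<Rightarrow> real \<Rightarrow> real" where
  "alpha_l n k l g rs \<eta> = Gamma_inc (xi n g \<eta> rs) (k - l + 1)"

definition beta_l :: "nat \<Rightarrow> nat \<Rightarrow> nat \<Rightarrow> real \<Rightarrow> (nat \<Rightarrow> real) \<Rightarrow> real \<Rightarrow> real" where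
  "beta_l n k l g b \<eta> = Gamma_inc (xi n g \<eta> (b l)) (k - l + 1)"

definition U_bound :: "nat \<Rightarrow> nat \<Rightarrow> nat \<Rightarrow> real \<Rightarrow> real \<Rightarrow> (nat \<Rightarrow> real) \<Rightarrow> real \<Rightarrow> real" where
  "U_bound n m k g rs b \<eta> =
     (\<Prod>l\<in>{1..m}. alpha_l n k l g rs \<eta>) *
     (1 - (\<Prod>l\<in>{1..m}. 1 - beta_l n k l g b \<eta> / alpha_l n k l g rs \<eta>))"

end

theory Submission
  imports Defs
begin

text \<open>By the fundamental theorem of calculus and the chain rule, each factor
  \<open>\<Gamma>\<^sub>inc(\<xi>(x), k-l+1)\<close> has logarithmic derivative \<open>-(n/\<eta>\<^sup>2) f\<^sub>l(x)\<close> in \<open>\<eta>\<close>.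
  The formula then follows from logarithmic differentiation of
  \<open>U = (\<Prod> A\<^sub>l)(1 - \<Prod> (1 - B\<^sub>l/A\<^sub>l))\<close> for arbitrary positive differentiable
  \<open>A\<^sub>l\<close>, using \<open>(1 - B/A)' = -(B/A)(B'/B - A'/A)\<close>. The only quantitative input is
  \<open>U > 0\<close>, i.e. \<open>0 < B\<^sub>l \<le> A\<^sub>l\<close>, which holds because \<open>0 < b\<^sub>l \<le> r\<^sub>s\<close> and
  \<open>\<Gamma>\<^sub>inc\<close> and \<open>\<xi>\<close> are increasing.\<close>

lemma Gamma_inc_has_real_derivative:
  assumes "y > 0"
  shows "((\<lambda>y. Gamma_inc y c) has_real_derivative y ^ (c - 1) * exp (- y) / fact (c - 1)) (at y)"
proof -
  let ?h = "\<lambda>t. t ^ (c - 1) * exp (- t)"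
  have "((\<lambda>u. integral {0..u} ?h) has_vector_derivative ?h y) (at y within {0..2*y})"
    by (rule integral_has_vector_derivative) (use assms in \<open>auto intro!: continuous_intros\<close>)
  moreover have "at y within {0..2*y} = at y"
    using assms by (intro at_within_interior) (simp add: interior_atLeastAtMost_real)
  ultimately have "((\<lambda>u. integral {0..u} ?h) has_real_derivative ?h y) (at y)"
    by (simp add: has_real_derivative_iff_has_vector_derivative)
  from DERIV_cmult[OF this, of "1 / fact (c - 1)"] show ?thesis
    unfolding Gamma_inc_def by simp
qed

lemma continuous_on_Gamma_inc: "continuous_on {0..Y} (\<lambda>y. Gamma_inc y c)"
proof -
  have "(\<lambda>t. t ^ (c - 1) * exp (- t)) integrable_on {0..Y}"
    by (rule integrable_continuous_real) (intro continuous_intros)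
  then have "continuous_on {0..Y} (\<lambda>u. integral {0..u} (\<lambda>t. t ^ (c - 1) * exp (- t)))"
    by (rule indefinite_integral_continuous_1)
  then show ?thesis unfolding Gamma_inc_def by (rule continuous_on_mult_left)
qed

lemma Gamma_inc_strict_mono:
  assumes "0 \<le> x" "x < y"
  shows "Gamma_inc x c < Gamma_inc y c"
proof (rule DERIV_pos_imp_increasing_open[OF assms(2)])
  fix z assume "x < z" "z < y"
  with assms have "z > 0" by linarith
  then show "\<exists>d. ((\<lambda>y. Gamma_inc y c) has_real_derivative d) (at z) \<and> d > 0"
    using Gamma_inc_has_real_derivative by force
next
  have "{x..y} \<subseteq> {0..y}" using assms by auto
  then show "continuous_on {x..y} (\<lambda>y. Gamma_inc y c)"
    using continuous_on_subset[OF continuous_on_Gamma_inc] by blast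
qed

lemma Gamma_inc_pos: "y > 0 \<Longrightarrow> Gamma_inc y c > 0"
  using Gamma_inc_strict_mono[of 0 y c] by (simp add: Gamma_inc_def)

lemma Gamma_inc_mono: "0 \<le> x \<Longrightarrow> x \<le> y \<Longrightarrow> Gamma_inc x c \<le> Gamma_inc y c"
  using Gamma_inc_strict_mono[of x y c] by (cases "x = y") auto

lemma xi_has_real_derivative:
  assumes "\<eta> > 0" "g > 0"
  shows "((\<lambda>e. xi n g e x) has_real_derivative
     (- (real n / \<eta>^2) * ((1 + g*\<eta>) powr x - x * g * \<eta> * (1 + g*\<eta>) powr (x - 1) - 1))) (at \<eta>)"
proof -
  have pos: "1 + g*\<eta> > 0" using assms by (simp add: add_pos_pos)
  have "((\<lambda>e. real n / e * ((1 + g * e) powr x - 1)) has_real_derivative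
      (- (real n / \<eta>^2)) * ((1 + g * \<eta>) powr x - 1) + real n / \<eta> * (x * (1 + g*\<eta>) powr (x - 1) * g)) (at \<eta>)"
    using assms pos
    by (auto intro!: derivative_eq_intros simp: power2_eq_square field_simps)
  then show ?thesis unfolding xi_def
    by (rule DERIV_cong) (use assms in \<open>simp add: power2_eq_square field_simps\<close>)
qed

lemma xi_pos: "\<eta> > 0 \<Longrightarrow> g > 0 \<Longrightarrow> x > 0 \<Longrightarrow> n > 0 \<Longrightarrow> xi n g \<eta> x > 0"
  unfolding xi_def by (intro mult_pos_pos divide_pos_pos) (auto simp: add_pos_pos)

lemma xi_mono: "\<eta> > 0 \<Longrightarrow> g > 0 \<Longrightarrow> x \<le> y \<Longrightarrow> xi n g \<eta> x \<le> xi n g \<eta> y"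
  unfolding xi_def by (intro mult_left_mono diff_right_mono powr_mono) auto

lemma prod_less_1_if_factor_less_1:
  fixes p :: "'i \<Rightarrow> 'a :: linordered_semidom"
  assumes "finite I" "i \<in> I" "p i < 1" "\<And>l. l \<in> I \<Longrightarrow> 0 \<le> p l \<and> p l \<le> 1"
  shows "(\<Prod>l\<in>I. p l) < 1"
proof -
  have "(\<Prod>l\<in>I. p l) = p i * (\<Prod>l\<in>I-{i}. p l)"
    using prod.remove[OF assms(1,2)] .
  also have "\<dots> \<le> p i"
    using assms(4) by (intro mult_left_le prod_le_1) (auto simp: assms(2))
  finally show ?thesis using assms(3) by simp
qed

lemma has_real_derivative_ln_prod_mult_one_minus_prod:
  fixes A B :: "'i \<Rightarrow> real \<Rightarrow> real" and a b :: "'i \<Rightarrow> real"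
  assumes "finite I"
    and A_deriv: "\<And>l. l \<in> I \<Longrightarrow> (A l has_real_derivative A l x * (c * a l)) (at x)"
    and B_deriv: "\<And>l. l \<in> I \<Longrightarrow> (B l has_real_derivative B l x * (c * b l)) (at x)"
    and A_pos: "\<And>l. l \<in> I \<Longrightarrow> A l x > 0"
    and P_less_1: "(\<Prod>l\<in>I. 1 - B l x / A l x) < 1"
  shows "((\<lambda>y. ln ((\<Prod>l\<in>I. A l y) * (1 - (\<Prod>l\<in>I. 1 - B l y / A l y)))) has_real_derivative
           c * (\<Sum>l\<in>I. a l + B l x / A l x * (b l - a l) * (\<Prod>j\<in>I-{l}. 1 - B j x / A j x)
                          / (1 - (\<Prod>j\<in>I. 1 - B j x / A j x)))) (at x)"
proof -
  define PA where "PA = (\<Prod>l\<in>I. A l x)"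
  define P where "P = (\<Prod>l\<in>I. 1 - B l x / A l x)"
  define S where "S = (\<Sum>l\<in>I. B l x / A l x * (b l - a l) * (\<Prod>j\<in>I-{l}. 1 - B j x / A j x))"
  have PA_pos: "PA > 0" unfolding PA_def using A_pos by (simp add: prod_pos)
  have "((\<lambda>y. \<Prod>l\<in>I. A l y) has_real_derivative PA * (\<Sum>l\<in>I. A l x * (c * a l) / A l x)) (at x)"
    unfolding PA_def using A_pos A_deriv
    by (intro has_field_derivative_prod') (auto simp: less_imp_neq[symmetric])
  moreover have "(\<Sum>l\<in>I. A l x * (c * a l) / A l x) = c * (\<Sum>l\<in>I. a l)"
    using A_pos by (auto simp: sum_distrib_left less_imp_neq[symmetric] intro: sum.cong)
  ultimately have dPA: "((\<lambda>y. \<Prod>l\<in>I. A l y) has_real_derivative PA * (c * (\<Sum>l\<in>I. a l))) (at x)"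
    by simp
  have dp: "((\<lambda>y. 1 - B l y / A l y) has_real_derivative - (c * (B l x / A l x * (b l - a l)))) (at x)"
    if "l \<in> I" for l
    using A_deriv[OF that] B_deriv[OF that] A_pos[OF that]
    by (auto intro!: derivative_eq_intros simp: power2_eq_square field_simps)
  have dP: "((\<lambda>y. \<Prod>l\<in>I. 1 - B l y / A l y) has_real_derivative - (c * S)) (at x)"
    using has_field_derivative_prod[of I, OF dp]
    unfolding S_def by (simp add: sum_negf sum_distrib_left mult.assoc)
  have U_pos: "PA * (1 - P) > 0" using PA_pos P_less_1 unfolding P_def by simp
  have "((\<lambda>y. (\<Prod>l\<in>I. A l y) * (1 - (\<Prod>l\<in>I. 1 - B l y / A l y))) has_real_derivative
      PA * (c * (\<Sum>l\<in>I. a l)) * (1 - P) + PA * (c * S)) (at x)"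
    using DERIV_mult[OF dPA DERIV_diff[OF DERIV_const[of 1] dP]] unfolding PA_def P_def
    by (simp add: mult.commute)
  from DERIV_chain2[OF DERIV_ln_divide[OF U_pos[unfolded PA_def P_def]] this]
  have "((\<lambda>y. ln ((\<Prod>l\<in>I. A l y) * (1 - (\<Prod>l\<in>I. 1 - B l y / A l y)))) has_real_derivative
      (PA * (c * (\<Sum>l\<in>I. a l)) * (1 - P) + PA * (c * S)) / (PA * (1 - P))) (at x)"
    unfolding PA_def P_def by simp
  moreover have "(PA * (c * (\<Sum>l\<in>I. a l)) * (1 - P) + PA * (c * S)) / (PA * (1 - P))
      = c * ((\<Sum>l\<in>I. a l) + S / (1 - P))"
    using PA_pos P_less_1 unfolding P_def by (simp add: field_simps)
  ultimately show ?thesis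
    unfolding P_def S_def by (simp add: sum.distrib sum_divide_distrib)
qed

lemma Gamma_inc_xi_ratio_bounds:
  assumes "\<eta> > 0" "g > 0" "n > 0" "0 < x" "x \<le> y"
  shows "0 \<le> 1 - Gamma_inc (xi n g \<eta> x) c / Gamma_inc (xi n g \<eta> y) c"
    and "1 - Gamma_inc (xi n g \<eta> x) c / Gamma_inc (xi n g \<eta> y) c < 1"
proof -
  have "0 < Gamma_inc (xi n g \<eta> x) c" "0 < Gamma_inc (xi n g \<eta> y) c"
    using assms by (auto intro!: Gamma_inc_pos xi_pos)
  moreover have "Gamma_inc (xi n g \<eta> x) c \<le> Gamma_inc (xi n g \<eta> y) c"
    using assms by (intro Gamma_inc_mono xi_mono less_imp_le[OF xi_pos])
  ultimately show "0 \<le> 1 - Gamma_inc (xi n g \<eta> x) c / Gamma_inc (xi n g \<eta> y) c"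
    and "1 - Gamma_inc (xi n g \<eta> x) c / Gamma_inc (xi n g \<eta> y) c < 1"
    by simp_all
qed

lemma Gamma_inc_xi_has_real_derivative:
  assumes "\<eta> > 0" "g > 0" "x > 0" "n > 0"
  shows "((\<lambda>e. Gamma_inc (xi n g e x) (k - l + 1)) has_real_derivative
           Gamma_inc (xi n g \<eta> x) (k - l + 1) * (- (real n / \<eta>^2) * f_l n k l g \<eta> x)) (at \<eta>)"
proof -
  let ?y = "xi n g \<eta> x"
  have y_pos: "?y > 0" using xi_pos assms by blast
  have G_pos: "Gamma_inc ?y (k - l + 1) > 0" using Gamma_inc_pos[OF y_pos] .
  from DERIV_chain2[OF Gamma_inc_has_real_derivative[OF y_pos] xi_has_real_derivative[OF assms(1,2)]]
  show ?thesis
    by (rule DERIV_cong) (use G_pos in \<open>simp add: f_l_def mult_ac\<close>)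
qed

theorem corollary1:
  fixes Nt Nm Ne :: nat and g rs \<eta> :: real and b :: "nat \<Rightarrow> real"
  assumes "Nt > 0" "Nm > 0" "Ne > 0" "Ne < Nt"
    and "g > 0" "rs > 0" "\<eta> > 0"
    and "\<forall>l\<in>{1..min (Nt - Ne) Nm}. b l > 0"
    and "\<forall>i j. 1 \<le> i \<and> i \<le> j \<and> j \<le> min (Nt - Ne) Nm \<longrightarrow> b j \<le> b i"
    and "(\<Sum>l\<in>{1..min (Nt - Ne) Nm}. b l) = rs"
  shows "let n = Nt - Ne; m = min n Nm; k = max n Nm;
             A = (\<lambda>l. alpha_l n k l g rs \<eta>); B = (\<lambda>l. beta_l n k l g b \<eta>);
             F = (\<lambda>l x. f_l n k l g \<eta> x)
         in \<exists>D. ((\<lambda>e. ln (U_bound n m k g rs b e)) has_real_derivative D) (at \<eta>) \<and>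
               - \<eta> * D = real n / \<eta> *
                 (\<Sum>l\<in>{1..m}. F l rs + B l / A l * (F l (b l) - F l rs) *
                    (\<Prod>j\<in>{1..m} - {l}. 1 - B j / A j) /
                    (1 - (\<Prod>j\<in>{1..m}. 1 - B j / A j)))"
proof -
  define n where "n = Nt - Ne"
  define m where "m = min n Nm"
  define k where "k = max n Nm"
  define A where "A = (\<lambda>l e. Gamma_inc (xi n g e rs) (k - l + 1))"
  define B where "B = (\<lambda>l e. Gamma_inc (xi n g e (b l)) (k - l + 1))"
  define F where "F = (\<lambda>l x. f_l n k l g \<eta> x)"
  define c where "c = - (real n / \<eta>^2)"
  have n_pos: "n > 0" using assms(4) unfolding n_def by simp
  have b_pos: "\<And>l. l \<in> {1..m} \<Longrightarrow> b l > 0" using assms(8) unfolding m_def n_def by blast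
  have b_le_rs: "b l \<le> rs" if "l \<in> {1..m}" for l
    using member_le_sum[OF that, of b] b_pos assms(10) unfolding m_def n_def by fastforce
  have p_bounds: "0 \<le> 1 - B l \<eta> / A l \<eta> \<and> 1 - B l \<eta> / A l \<eta> < 1" if "l \<in> {1..m}" for l
    unfolding A_def B_def using assms(5,7) n_pos b_pos[OF that] b_le_rs[OF that]
    by (blast intro: Gamma_inc_xi_ratio_bounds)
  have "1 \<in> {1..m}" using n_pos assms(2) unfolding m_def by simp
  then have P_less_1: "(\<Prod>l\<in>{1..m}. 1 - B l \<eta> / A l \<eta>) < 1"
    using p_bounds by (intro prod_less_1_if_factor_less_1[of _ 1]) (auto intro: less_imp_le)
  have dA: "(A l has_real_derivative A l \<eta> * (c * F l rs)) (at \<eta>)" for l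
    unfolding A_def F_def c_def using assms(5-7) n_pos by (intro Gamma_inc_xi_has_real_derivative)
  have dB: "(B l has_real_derivative B l \<eta> * (c * F l (b l))) (at \<eta>)" if "l \<in> {1..m}" for l
    unfolding B_def F_def c_def using assms(5,7) b_pos[OF that] n_pos
    by (intro Gamma_inc_xi_has_real_derivative)
  have A_pos: "A l \<eta> > 0" for l
    unfolding A_def using assms n_pos by (intro Gamma_inc_pos xi_pos) auto
  note dlnU = has_real_derivative_ln_prod_mult_one_minus_prod[OF _ dA dB A_pos P_less_1]
  have "- \<eta> * c = real n / \<eta>"
    using assms(7) unfolding c_def by (simp add: power2_eq_square)
  with dlnU show ?thesis
    unfolding Let_def n_def[symmetric] m_def[symmetric] k_def[symmetric]
    unfolding U_bound_def alpha_l_def beta_l_def A_def B_def F_def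
    by (intro exI[of _ "c * _"] conjI) (simp_all only: finite_atLeastAtMost mult.assoc[symmetric])
qed

end
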